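(* Consider the following random construction (the graph gamma process). Let $(\rho_i)_{i\ge 1}$ be the atom weights of a gamma process with mass parameter $\gamma_{0,\rho}>0$ and rate $c_\rho>0$, and let $(\tau_i)_{i\ge1}$ be positive weights attached to the same countably many nodes $i$, distributed as the atom weights of a gamma process with mass parameter $\gamma_{0,\tau}>0$ and rate $c_\tau>0$. Let $(r_\kappa)_{\kappa\ge1}$ be the atom weights of a gamma process with mass parameter $\gamma_0>0$ and rate $c>0$ (i.e. the points of a Poisson process on $(0,\infty)$ with intensity $\gamma_0 r^{-1}e^{-cr}\,dr$). Given these, for every community $\kappa\ge1$ and nodes $i,j\ge1$ draw independently $$\theta_{i\kappa}\sim\mathrm{Gamma}(\rho_i,1/e),\qquad \psi_{j\kappa}\sim\mathrm{Gamma}(\tau_j,1/f),$$ with constants $e,f>0$ (Gamma$(a,s)$ denotes shape $a$, scale $s$), then independently $z_{ij\kappa}\sim\mathrm{Bernoulli}\big(1-e^{-r_\kappa\theta_{i\kappa}\psi_{j\kappa}}\big)$, and set $$z_{ij}=\bigvee_{\kappa=1}^\infty z_{ij\kappa},$$ i.e. $z_{ij}=1$ if $z_{ij\kappa}=1$ for at least one $\kappa$ and $z_{ij}=0$ otherwise (equivalently $z_{ij}\sim\mathrm{Bernoulli}(1-e^{-\sum_{\kappa}r_\kappa\theta_{i\kappa}\psi_{j\kappa}})$). Then the number of edges of the graph with adjacency matrix ${\bf Z}=(z_{ij})$, namely $\sum_{i=1}^\infty\sum_{j=1}^\infty z_{ij}$, is finite (almost surely).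
   Context: The binary array ${\bf Z}=(z_{ij})_{i,j\ge1}$ is interpreted as the adjacency matrix of a directed graph on countably infinitely many nodes, obtained as the entrywise logical OR of the community-specific adjacency matrices $(z_{ij\kappa})_{i,j}$, $\kappa\ge1$. *)

theory Defs
  imports "HOL-Probability.Probability"
begin

text \<open>For degenerate parameters
  (a \<le> 0 or s \<le> 0, which occur only on null sets in the model) we use the
  point mass at 0 as a harmless convention so that kernels are always
  probability measures.\<close>
definition gamma_density :: "real \<Rightarrow> real \<Rightarrow> real \<Rightarrow> real" where
  "gamma_density a s x =
     (if 0 < x then x powr (a - 1) * exp (- x / s) / (Gamma a * s powr a) else 0)"

definition gamma_measure :: "real \<Rightarrow> real \<Rightarrow> real measure" where
  "gamma_measure a s =
     (if 0 < a \<and> 0 < s then density lborel (\<lambda>x. ennreal (gamma_density a s x))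
      else return borel 0)"

definition bernoulli_measure :: "real \<Rightarrow> bool measure" where
  "bernoulli_measure p = measure_pmf (bernoulli_pmf p)"

definition gamma_process_intensity :: "real \<Rightarrow> real \<Rightarrow> real measure" where
  "gamma_process_intensity g0 c =
     density lborel (\<lambda>r. ennreal (if 0 < r then g0 / r * exp (- c * r) else 0))"

definition pcount :: "real set \<Rightarrow> (nat \<Rightarrow> real) \<Rightarrow> nat" where
  "pcount A x = card {i. x i \<in> A}"

text \<open>P is the law of an enumeration (x_i)_{i\<ge>1} (indexed here by nat) of the
  points of a Poisson process with intensity measure mu on the real line:
  the points are a.s. distinct, for every Borel set A of finite intensity the
  number of points in A is (a.s. finite and) Poisson(mu A) distributed, and
  the counts of finitely many pairwise disjoint such sets are independent.\<close>
definition poisson_process_law :: "real measure \<Rightarrow> (nat \<Rightarrow> real) measure \<Rightarrow> bool" where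
  "poisson_process_law mu P \<longleftrightarrow>
     prob_space P \<and>
     sets P = sets (PiM (UNIV :: nat set) (\<lambda>_. borel)) \<and>
     (AE x in P. inj x) \<and>
     (\<forall>A k. A \<in> sets borel \<and> emeasure mu A < \<infinity> \<longrightarrow>
        measure P {x \<in> space P. finite {i. x i \<in> A} \<and> pcount A x = k}
          = measure mu A ^ k / fact k * exp (- measure mu A)) \<and>
     (\<forall>(n::nat) (A :: nat \<Rightarrow> real set).
        (\<forall>m<n. A m \<in> sets borel \<and> emeasure mu (A m) < \<infinity>) \<and> disjoint_family_on A {..<n}
        \<longrightarrow> prob_space.indep_vars P (\<lambda>_. count_space UNIV) (\<lambda>m x. pcount (A m) x) {..<n})"

definition gamma_process_law :: "real \<Rightarrow> real \<Rightarrow> (nat \<Rightarrow> real) measure \<Rightarrow> bool" where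
  "gamma_process_law g0 c P \<longleftrightarrow> poisson_process_law (gamma_process_intensity g0 c) P"

definition ggp_law ::
  "(nat \<Rightarrow> real) measure \<Rightarrow> (nat \<Rightarrow> real) measure \<Rightarrow> (nat \<Rightarrow> real) measure
   \<Rightarrow> real \<Rightarrow> real \<Rightarrow> (nat \<times> nat \<times> nat \<Rightarrow> bool) measure" where
  "ggp_law Prho Ptau Pr e f =
     bind (Prho \<Otimes>\<^sub>M (Ptau \<Otimes>\<^sub>M Pr)) (\<lambda>(rho, tau, r).
       bind (PiM (UNIV :: (nat \<times> nat) set) (\<lambda>(i, k). gamma_measure (rho i) (1 / e))) (\<lambda>theta.
         bind (PiM (UNIV :: (nat \<times> nat) set) (\<lambda>(j, k). gamma_measure (tau j) (1 / f))) (\<lambda>psi.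
           PiM (UNIV :: (nat \<times> nat \<times> nat) set)
             (\<lambda>(i, j, k). bernoulli_measure (1 - exp (- (r k * theta (i, k) * psi (j, k))))))))"

definition ggp_adj :: "(nat \<times> nat \<times> nat \<Rightarrow> bool) \<Rightarrow> nat \<Rightarrow> nat \<Rightarrow> bool" where
  "ggp_adj z i j \<longleftrightarrow> (\<exists>k. z (i, j, k))"

end

theory Submission
  imports Defs
begin

text \<open>
  Everything is controlled by first moments. By Campbell's formula, applied to a step function
  squeezed between |r| and 2|r|, the atoms of a gamma process with mass g0 and rate c have
  expected total size at most 2 g0 / c, so the weights rho, tau and r are a.s. absolutely summable.
  Given them, the sum of r_k theta_ik over (i, k) has mean (sum rho)(sum r) / e; given also theta,
  the sum of r_k theta_ik psi_jk over (i, j, k) has mean (sum of r_k theta_ik)(sum tau) / f. So both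
  sums are a.s. finite, and since 1 - exp (-x) \<le> x, the expected number of triples with
  z_ijk = 1 is finite. Hence a.s. only finitely many z_ijk are 1, and the graph has finitely many
  edges.
\<close>

section \<open>Almost-everywhere reasoning and countable sums\<close>

text \<open>No measurability of f is needed: for non-measurable f, distr M N f is the null measure.\<close>

lemma emeasure_distr_eq_0_of_AE:
  assumes "AE x in M. f x \<notin> A"
  shows "emeasure (distr M N f) A = 0"
proof -
  obtain B where B: "B \<in> null_sets M" "{x \<in> space M. f x \<in> A} \<subseteq> B"
    using assms by (auto elim!: AE_E)
  have "emeasure M (f -` A \<inter> space M) = 0"
  proof (cases "f -` A \<inter> space M \<in> sets M")
    case True
    moreover have "f -` A \<inter> space M \<subseteq> B" using B(2) by auto
    ultimately show ?thesis using null_sets_subset[OF B(1)] by (simp add: null_setsD1)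
  qed (simp add: emeasure_notin_sets)
  moreover have "emeasure (distr M N f) A \<le> emeasure M (f -` A \<inter> space M)"
    unfolding distr_def by (simp add: emeasure_measure_of_conv)
  ultimately show ?thesis by simp
qed

text \<open>Unlike the library's AE_bind, this needs no measurability of the kernel N.\<close>

lemma AE_bindI:
  assumes AE: "AE x in M. AE y in N x. P y"
    and M: "space M \<noteq> {}"
    and sets_N: "\<And>x. x \<in> space M \<Longrightarrow> sets (N x) = sets B"
    and P: "Measurable.pred B P"
  shows "AE y in M \<bind> N. P y"
proof -
  define x0 where "x0 = (SOME x. x \<in> space M)"
  have x0: "x0 \<in> space M" unfolding x0_def using M by (simp add: some_in_eq)
  define D where "D = distr M (subprob_algebra (N x0)) N"
  have sets_D: "sets D = sets (subprob_algebra (N x0))" unfolding D_def by simp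
  define Bad where "Bad = {y \<in> space B. \<not> P y}"
  have Bad: "Bad \<in> sets (N x0)" unfolding Bad_def using sets_N[OF x0] P by simp
  define G where "G = {M' \<in> space (subprob_algebra (N x0)). emeasure M' Bad \<noteq> 0}"
  have G: "G \<in> sets (subprob_algebra (N x0))"
    using measurable_emeasure_subprob_algebra[OF Bad] unfolding G_def by measurable
  have "AE x in M. N x \<notin> G"
    using AE
  proof (rule AE_mp, intro AE_I2 impI)
    fix x assume x: "x \<in> space M" and "AE y in N x. P y"
    moreover have "Bad = {y \<in> space (N x). \<not> P y}"
      using sets_eq_imp_space_eq[OF sets_N[OF x]] unfolding Bad_def by simp
    ultimately have "emeasure (N x) Bad = 0"
      using AE_iff_measurable Bad sets_N[OF x] sets_N[OF x0] by metis
    then show "N x \<notin> G" unfolding G_def by simp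
  qed
  then have "emeasure D G = 0"
    unfolding D_def by (rule emeasure_distr_eq_0_of_AE)
  then have "AE M' in D. emeasure M' Bad = 0"
  proof (intro AE_I'[of G])
    show "G \<in> null_sets D" by (intro null_setsI) (simp_all add: sets_D G \<open>emeasure D G = 0\<close>)
    show "{M' \<in> space D. emeasure M' Bad \<noteq> 0} \<subseteq> G"
      using sets_eq_imp_space_eq[OF sets_D] unfolding G_def by auto
  qed
  then have "(\<integral>\<^sup>+M'. emeasure M' Bad \<partial>D) = 0"
    by (subst nn_integral_cong_AE[where v="\<lambda>_. 0"]) auto
  then have "emeasure (join D) Bad = 0"
    using emeasure_join[OF sets_D Bad] by simp
  moreover have "M \<bind> N = join D"
    unfolding D_def x0_def by (simp add: bind_nonempty M)
  moreover have sets_MN: "sets (M \<bind> N) = sets B"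
    using sets_N M by (rule sets_bind)
  ultimately have "Bad \<in> null_sets (M \<bind> N)"
    using P unfolding Bad_def by (intro null_setsI) simp_all
  moreover have "{y \<in> space (M \<bind> N). \<not> P y} \<subseteq> Bad"
    using sets_eq_imp_space_eq[OF sets_MN] unfolding Bad_def by simp
  ultimately show ?thesis by (rule AE_I')
qed

lemma AE_pair_measure_fst:
  assumes "sigma_finite_measure N" and "AE x in M. P x"
  shows "AE y in M \<Otimes>\<^sub>M N. P (fst y)"
proof -
  obtain A where A: "A \<in> null_sets M" "{x \<in> space M. \<not> P x} \<subseteq> A"
    using assms(2) by (auto elim!: AE_E)
  have "A \<times> space N \<in> null_sets (M \<Otimes>\<^sub>M N)"
    by (rule sigma_finite_measure.times_in_null_sets1[OF assms(1) A(1) sets.top])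
  then show ?thesis
    by (rule AE_I') (use A(2) in \<open>auto simp: space_pair_measure\<close>)
qed

lemma AE_pair_measure_snd:
  assumes "sigma_finite_measure N" and "AE x in N. P x"
  shows "AE y in M \<Otimes>\<^sub>M N. P (snd y)"
proof -
  obtain A where A: "A \<in> null_sets N" "{x \<in> space N. \<not> P x} \<subseteq> A"
    using assms(2) by (auto elim!: AE_E)
  have "space M \<times> A \<in> null_sets (M \<Otimes>\<^sub>M N)"
    by (rule sigma_finite_measure.times_in_null_sets2[OF assms(1) sets.top A(1)])
  then show ?thesis
    by (rule AE_I') (use A(2) in \<open>auto simp: space_pair_measure\<close>)
qed

lemma AE_pair_measure_triple:
  assumes "sigma_finite_measure M3" and "sigma_finite_measure (M2 \<Otimes>\<^sub>M M3)"
    and "AE x in M1. P1 x" and "AE x in M2. P2 x" and "AE x in M3. P3 x"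
  shows "AE w in M1 \<Otimes>\<^sub>M (M2 \<Otimes>\<^sub>M M3). P1 (fst w) \<and> P2 (fst (snd w)) \<and> P3 (snd (snd w))"
  using AE_pair_measure_fst[OF assms(2,3)]
    AE_pair_measure_snd[where M=M1, OF assms(2) AE_pair_measure_fst[OF assms(1,4)]]
    AE_pair_measure_snd[where M=M1, OF assms(2) AE_pair_measure_snd[OF assms(1,5)]]
  by eventually_elim auto

lemma borel_measurable_nn_integral_count_space:
  fixes f :: "'i::countable \<Rightarrow> 'a \<Rightarrow> ennreal"
  assumes "\<And>i. f i \<in> borel_measurable M"
  shows "(\<lambda>x. \<integral>\<^sup>+i. f i x \<partial>count_space UNIV) \<in> borel_measurable M"
proof (cases "finite (UNIV :: 'i set)")
  case True
  then show ?thesis using assms by (simp add: nn_integral_count_space_finite)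
next
  case False
  note bij = bij_betw_from_nat_into[OF countableI_type False]
  have "(\<lambda>x. \<integral>\<^sup>+i. f i x \<partial>count_space UNIV) = (\<lambda>x. \<Sum>n. f (from_nat_into UNIV n) x)"
    by (simp add: nn_integral_bij_count_space[symmetric, OF bij] nn_integral_count_space_nat)
  then show ?thesis using assms by simp
qed

lemma le_nn_integral_count_space:
  "f t \<le> (\<integral>\<^sup>+s. f s \<partial>count_space UNIV)"
proof -
  have "f t = (\<integral>\<^sup>+s. f s * indicator {t} s \<partial>count_space UNIV)"
    by simp
  also have "\<dots> \<le> (\<integral>\<^sup>+s. f s \<partial>count_space UNIV)"
    by (intro nn_integral_mono) (simp add: indicator_def)
  finally show ?thesis .
qed

lemma nn_integral_count_space_prod_mult:
  fixes a :: "'i::countable \<Rightarrow> ennreal" and b :: "'j::countable \<Rightarrow> ennreal"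
  shows "(\<integral>\<^sup>+t. a (fst t) * b (snd t) \<partial>count_space UNIV)
       = (\<integral>\<^sup>+i. a i \<partial>count_space UNIV) * (\<integral>\<^sup>+j. b j \<partial>count_space UNIV)"
proof -
  have "(\<integral>\<^sup>+t. a (fst t) * b (snd t) \<partial>count_space UNIV)
      = (\<integral>\<^sup>+i. \<integral>\<^sup>+j. a i * b j \<partial>count_space UNIV \<partial>count_space UNIV)"
    using nn_integral_fst_count_space[of "\<lambda>t. a (fst t) * b (snd t)"] by simp
  also have "\<dots> = (\<integral>\<^sup>+i. a i * (\<integral>\<^sup>+j. b j \<partial>count_space UNIV) \<partial>count_space UNIV)"
    by (simp add: nn_integral_cmult)
  finally show ?thesis by (simp add: nn_integral_multc)
qed

lemma nn_integral_count_space_triple_mult: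
  fixes a :: "'i::countable \<times> 'k::countable \<Rightarrow> ennreal" and b :: "'j::countable \<Rightarrow> ennreal"
  shows "(\<integral>\<^sup>+u. a (fst u, snd (snd u)) * b (fst (snd u)) \<partial>count_space UNIV)
       = (\<integral>\<^sup>+t. a t \<partial>count_space UNIV) * (\<integral>\<^sup>+j. b j \<partial>count_space UNIV)"
proof -
  have "bij_betw (\<lambda>(t, j). (fst t, j, snd t)) UNIV (UNIV :: ('i \<times> 'j \<times> 'k) set)"
    by (rule bij_betwI[where g="\<lambda>(i, j, k). ((i, k), j)"]) auto
  from nn_integral_bij_count_space[OF this, of "\<lambda>u. a (fst u, snd (snd u)) * b (fst (snd u))"]
  show ?thesis
    by (simp add: case_prod_beta nn_integral_count_space_prod_mult)
qed

lemma nn_integral_PiM_component: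
  assumes "\<And>i. i \<in> I \<Longrightarrow> prob_space (M i)" and "i \<in> I" and "g \<in> borel_measurable (M i)"
  shows "(\<integral>\<^sup>+\<omega>. g (\<omega> i) \<partial>PiM I M) = (\<integral>\<^sup>+x. g x \<partial>M i)"
proof -
  have "(\<integral>\<^sup>+x. g x \<partial>M i) = (\<integral>\<^sup>+x. g x \<partial>distr (PiM I M) (M i) (\<lambda>\<omega>. \<omega> i))"
    using distr_PiM_component[of I M i] assms(1,2) by simp
  also have "\<dots> = (\<integral>\<^sup>+\<omega>. g (\<omega> i) \<partial>PiM I M)"
    using assms(2,3) by (subst nn_integral_distr) (auto intro: measurable_component_singleton)
  finally show ?thesis ..
qed

lemma AE_PiM_weighted_abs_sum_finite:
  fixes M :: "'i \<Rightarrow> real measure" and W :: "'j::countable \<Rightarrow> ennreal" and idx :: "'j \<Rightarrow> 'i"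
  assumes M: "\<And>i. prob_space (M i)" "\<And>i. sets (M i) = sets borel"
    and mean: "(\<integral>\<^sup>+u. W u * (\<integral>\<^sup>+x. ennreal \<bar>x\<bar> \<partial>M (idx u)) \<partial>count_space UNIV) < \<infinity>"
  shows "AE \<omega> in PiM UNIV M. (\<integral>\<^sup>+u. W u * ennreal \<bar>\<omega> (idx u)\<bar> \<partial>count_space UNIV) < \<infinity>"
proof -
  have abs_M: "(\<lambda>x. ennreal \<bar>x\<bar>) \<in> borel_measurable (M i)" for i
    unfolding measurable_cong_sets[OF M(2) refl] by measurable
  have [measurable]: "(\<lambda>\<omega>. \<omega> i) \<in> borel_measurable (PiM UNIV M)" for i
    unfolding measurable_cong_sets[OF refl M(2)[of i, symmetric]]
    by (rule measurable_component_singleton) simp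
  have "(\<integral>\<^sup>+\<omega>. (\<integral>\<^sup>+u. W u * ennreal \<bar>\<omega> (idx u)\<bar> \<partial>count_space UNIV) \<partial>PiM UNIV M)
      = (\<integral>\<^sup>+u. \<integral>\<^sup>+\<omega>. W u * ennreal \<bar>\<omega> (idx u)\<bar> \<partial>PiM UNIV M \<partial>count_space UNIV)"
    by (rule nn_integral_count_space_nn_integral) auto
  also have "\<dots> = (\<integral>\<^sup>+u. W u * (\<integral>\<^sup>+x. ennreal \<bar>x\<bar> \<partial>M (idx u)) \<partial>count_space UNIV)"
  proof (intro nn_integral_cong)
    fix u
    have "(\<integral>\<^sup>+\<omega>. W u * ennreal \<bar>\<omega> (idx u)\<bar> \<partial>PiM UNIV M)
        = W u * (\<integral>\<^sup>+\<omega>. ennreal \<bar>\<omega> (idx u)\<bar> \<partial>PiM UNIV M)"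
      by (rule nn_integral_cmult) measurable
    also have "\<dots> = W u * (\<integral>\<^sup>+x. ennreal \<bar>x\<bar> \<partial>M (idx u))"
      by (simp only: nn_integral_PiM_component[OF M(1) UNIV_I abs_M])
    finally show "(\<integral>\<^sup>+\<omega>. W u * ennreal \<bar>\<omega> (idx u)\<bar> \<partial>PiM UNIV M)
        = W u * (\<integral>\<^sup>+x. ennreal \<bar>x\<bar> \<partial>M (idx u))" .
  qed
  finally have "(\<integral>\<^sup>+\<omega>. (\<integral>\<^sup>+u. W u * ennreal \<bar>\<omega> (idx u)\<bar> \<partial>count_space UNIV) \<partial>PiM UNIV M) \<noteq> \<infinity>"
    using mean by simp
  then have "AE \<omega> in PiM UNIV M. (\<integral>\<^sup>+u. W u * ennreal \<bar>\<omega> (idx u)\<bar> \<partial>count_space UNIV) \<noteq> \<infinity>"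
    by (intro nn_integral_noteq_infinite borel_measurable_nn_integral_count_space) measurable
  then show ?thesis
    by (simp add: less_top)
qed

lemma nn_integral_nat_valued_eq_suminf:
  fixes X :: "'a \<Rightarrow> ennreal"
  assumes "prob_space P" and X[measurable]: "X \<in> borel_measurable P"
    and total: "(\<Sum>k. emeasure P {x \<in> space P. X x = of_nat k}) = 1"
  shows "(\<integral>\<^sup>+x. X x \<partial>P) = (\<Sum>k. of_nat k * emeasure P {x \<in> space P. X x = of_nat k})"
proof -
  interpret prob_space P by fact
  define E where "E k = {x \<in> space P. X x = of_nat k}" for k :: nat
  have E[measurable]: "E k \<in> sets P" for k
    unfolding E_def by measurable
  have disj: "disjoint_family E"
    unfolding disjoint_family_on_def E_def by auto
  have "emeasure P (\<Union>k. E k) = 1"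
    using total disj unfolding E_def by (subst suminf_emeasure[symmetric]) auto
  then have "AE x in P. x \<in> (\<Union>k. E k)"
    by (intro AE_prob_1) (simp add: measure_def)
  then have "(\<integral>\<^sup>+x. X x \<partial>P) = (\<integral>\<^sup>+x. (\<Sum>k. of_nat k * indicator (E k) x) \<partial>P)"
  proof (rule nn_integral_cong_AE[OF AE_mp], intro AE_I2 impI)
    fix x assume "x \<in> (\<Union>k. E k)"
    then obtain k where k: "x \<in> E k" by auto
    have "x \<notin> E m" if "m \<noteq> k" for m
      using k disj that by (auto simp: disjoint_family_on_def)
    then have "(\<lambda>m. of_nat m * indicator (E m) x :: ennreal) = (\<lambda>m. if m = k then of_nat k else 0)"
      using k by (intro ext) (auto simp: indicator_def)
    then show "X x = (\<Sum>m. of_nat m * indicator (E m) x)"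
      using k sums_unique[OF sums_single[of k "\<lambda>_. of_nat k :: ennreal"]] by (simp add: E_def)
  qed
  also have "\<dots> = (\<Sum>k. of_nat k * emeasure P (E k))"
    by (subst nn_integral_suminf) (auto simp: nn_integral_cmult_indicator)
  finally show ?thesis unfolding E_def .
qed

section \<open>Gamma distributions\<close>

lemma nn_integral_gamma_kernel:
  fixes a s :: real
  assumes a: "0 < a" and s: "0 < s"
  shows "(\<integral>\<^sup>+x. ennreal (if 0 < x then x powr (a - 1) * exp (- x / s) else 0) \<partial>lborel)
         = ennreal (Gamma a * s powr a)"
proof -
  let ?f = "\<lambda>x::real. ennreal (if 0 < x then x powr (a - 1) * exp (- x / s) else 0)"
  have scaled: "?f (0 + s * x) = ennreal (s powr (a - 1)) * ennreal (indicator {0..} x * x powr (a - 1) / exp x)"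
    for x :: real
  proof (cases "0 < x")
    case True
    then have "(s * x) powr (a - 1) * exp (- (s * x) / s) = s powr (a - 1) * (x powr (a - 1) / exp x)"
      using s by (simp add: powr_mult exp_minus field_simps)
    then show ?thesis using True s by (simp add: ennreal_mult'[symmetric] zero_less_mult_iff)
  next
    case False
    then show ?thesis using s by (cases "x = 0") (auto simp: zero_less_mult_iff)
  qed
  have "(\<integral>\<^sup>+x. ?f x \<partial>lborel) = ennreal s * (\<integral>\<^sup>+x. ?f (0 + s * x) \<partial>lborel)"
    using nn_integral_real_affine[of ?f s 0] s by simp
  also have "\<dots> = ennreal s * (ennreal (s powr (a - 1)) * ennreal (Gamma a))"
    unfolding scaled using a by (subst nn_integral_cmult) (auto simp: Gamma_conv_nn_integral_real)
  also have "\<dots> = ennreal (Gamma a * s powr a)"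
    using s Gamma_real_pos[OF a]
    by (simp add: ennreal_mult'[symmetric] powr_diff mult_ac)
  finally show ?thesis .
qed

lemma borel_measurable_gamma_density [measurable]: "gamma_density a s \<in> borel_measurable borel"
  unfolding gamma_density_def[abs_def] by measurable

lemma sets_gamma_measure [simp, measurable_cong]: "sets (gamma_measure a s) = sets borel"
  by (simp add: gamma_measure_def)

lemma space_gamma_measure [simp]: "space (gamma_measure a s) = UNIV"
  by (simp add: gamma_measure_def)

lemma prob_space_gamma_measure: "prob_space (gamma_measure a s)"
proof (cases "0 < a \<and> 0 < s")
  case True
  then have a: "0 < a" and s: "0 < s" by auto
  have G: "0 < Gamma a" using a by simp
  then have norm: "0 < Gamma a * s powr a" using s by simp
  have "emeasure (gamma_measure a s) UNIV = (\<integral>\<^sup>+x. ennreal (gamma_density a s x) \<partial>lborel)"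
    using True by (simp add: gamma_measure_def emeasure_density)
  also have "\<dots> = (\<integral>\<^sup>+x. ennreal (if 0 < x then x powr (a - 1) * exp (- x / s) else 0)
                      * ennreal (1 / (Gamma a * s powr a)) \<partial>lborel)"
    using norm by (intro nn_integral_cong) (simp add: gamma_density_def ennreal_mult'[symmetric])
  also have "\<dots> = ennreal (Gamma a * s powr a) * ennreal (1 / (Gamma a * s powr a))"
    by (subst nn_integral_multc) (use a s in \<open>auto simp: nn_integral_gamma_kernel\<close>)
  also have "\<dots> = 1"
    using G s by (simp add: ennreal_mult'[symmetric])
  finally show ?thesis
    by (intro prob_spaceI) simp
next
  case False
  then show ?thesis by (auto simp: gamma_measure_def prob_space_return)
qed

lemma nn_integral_abs_gamma_measure:
  assumes s: "0 < s"
  shows "(\<integral>\<^sup>+x. ennreal \<bar>x\<bar> \<partial>gamma_measure a s) = ennreal a * ennreal s"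
proof (cases "0 < a")
  case a: True
  have G: "Gamma a \<noteq> 0" using Gamma_real_pos[OF a] by linarith
  have norm: "0 < Gamma a * s powr a" using a s by simp
  have "(\<integral>\<^sup>+x. ennreal \<bar>x\<bar> \<partial>gamma_measure a s)
      = (\<integral>\<^sup>+x. ennreal (gamma_density a s x) * ennreal \<bar>x\<bar> \<partial>lborel)"
    using a s by (simp add: gamma_measure_def nn_integral_density)
  also have "\<dots> = (\<integral>\<^sup>+x. ennreal (if 0 < x then x powr ((a + 1) - 1) * exp (- x / s) else 0)
                      * ennreal (1 / (Gamma a * s powr a)) \<partial>lborel)"
  proof (intro nn_integral_cong)
    fix x :: real
    have "0 < x \<Longrightarrow> x powr (a - 1) * x = x powr a" by (simp add: powr_diff)
    then show "ennreal (gamma_density a s x) * ennreal \<bar>x\<bar>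
        = ennreal (if 0 < x then x powr ((a + 1) - 1) * exp (- x / s) else 0) * ennreal (1 / (Gamma a * s powr a))"
      using norm by (auto simp: gamma_density_def ennreal_mult'[symmetric] field_simps)
  qed
  also have "\<dots> = ennreal (Gamma (a + 1) * s powr (a + 1)) * ennreal (1 / (Gamma a * s powr a))"
    by (subst nn_integral_multc) (use a s in \<open>auto simp: nn_integral_gamma_kernel\<close>)
  also have "\<dots> = ennreal (a * s)"
  proof -
    have "Gamma (a + 1) = a * Gamma a"
      using a by (intro Gamma_plus1) auto
    then show ?thesis
      using a s G by (simp add: ennreal_mult'[symmetric] powr_add)
  qed
  finally show ?thesis using a s by (simp add: ennreal_mult)
next
  case False
  then show ?thesis by (simp add: gamma_measure_def nn_integral_return ennreal_neg)
qed

lemma AE_PiM_gamma_weighted_abs_sum_finite: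
  fixes a :: "'i \<Rightarrow> real" and W :: "'j::countable \<Rightarrow> ennreal" and idx :: "'j \<Rightarrow> 'i"
  assumes s: "0 < s" and mean: "(\<integral>\<^sup>+u. W u * ennreal (a (idx u)) \<partial>count_space UNIV) < \<infinity>"
  shows "AE \<omega> in PiM UNIV (\<lambda>i. gamma_measure (a i) s).
           (\<integral>\<^sup>+u. W u * ennreal \<bar>\<omega> (idx u)\<bar> \<partial>count_space UNIV) < \<infinity>"
proof (rule AE_PiM_weighted_abs_sum_finite)
  have "(\<integral>\<^sup>+u. W u * (\<integral>\<^sup>+x. ennreal \<bar>x\<bar> \<partial>gamma_measure (a (idx u)) s) \<partial>count_space UNIV)
      = (\<integral>\<^sup>+u. W u * ennreal (a (idx u)) \<partial>count_space UNIV) * ennreal s"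
    using s by (simp add: nn_integral_abs_gamma_measure nn_integral_multc mult.assoc[symmetric])
  also have "\<dots> < \<infinity>"
    using mean by (simp add: ennreal_mult_less_top)
  finally show "(\<integral>\<^sup>+u. W u * (\<integral>\<^sup>+x. ennreal \<bar>x\<bar> \<partial>gamma_measure (a (idx u)) s)
      \<partial>count_space UNIV) < \<infinity>" .
qed (simp_all add: prob_space_gamma_measure)

section \<open>Products of Bernoulli distributions\<close>

lemma nn_integral_count_space_of_bool_less_top_iff:
  "(\<integral>\<^sup>+t. of_bool (P t) \<partial>count_space UNIV) < \<infinity> \<longleftrightarrow> finite {t. P t}"
proof -
  have "(\<lambda>t. of_bool (P t) :: ennreal) = indicator {t. P t}"
    by (auto simp: indicator_def)
  then have "(\<integral>\<^sup>+t. of_bool (P t) \<partial>count_space UNIV) = emeasure (count_space UNIV) {t. P t}"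
    by simp
  then show ?thesis by (simp add: emeasure_count_space of_nat_less_top)
qed

lemma pred_finite_Collect_PiM:
  "Measurable.pred (PiM (UNIV :: 'i::countable set) (\<lambda>_. count_space UNIV)) (\<lambda>z. finite {t. z t})"
proof -
  have "(\<lambda>z. \<integral>\<^sup>+t. of_bool (z t) \<partial>count_space UNIV)
      \<in> borel_measurable (PiM (UNIV :: 'i set) (\<lambda>_. count_space UNIV))"
    by (intro borel_measurable_nn_integral_count_space) measurable
  then show ?thesis
    unfolding nn_integral_count_space_of_bool_less_top_iff[symmetric] by measurable
qed

lemma ennreal_pmf_bernoulli_True_le: "ennreal (pmf (bernoulli_pmf p) True) \<le> ennreal p"
proof -
  interpret pmf_as_function .
  have "pmf (bernoulli_pmf p) True = min 1 (max 0 p)"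
    by transfer simp
  then show ?thesis
    by (cases "p \<le> 0") (auto intro!: ennreal_leI simp: ennreal_neg)
qed

lemma AE_PiM_bernoulli_finite:
  fixes p :: "'i::countable \<Rightarrow> real"
  assumes summable: "(\<integral>\<^sup>+t. ennreal (p t) \<partial>count_space UNIV) < \<infinity>"
  shows "AE z in PiM UNIV (\<lambda>t. bernoulli_measure (p t)). finite {t. z t}"
proof -
  let ?M = "PiM UNIV (\<lambda>t. bernoulli_measure (p t))"
  have prob: "prob_space (bernoulli_measure q)" for q
    by (simp add: bernoulli_measure_def prob_space_measure_pmf)
  have [measurable]: "(\<lambda>z. z t) \<in> measurable ?M (count_space UNIV)" for t
    using measurable_component_singleton[of t UNIV "\<lambda>t. bernoulli_measure (p t)"]
    by (simp add: bernoulli_measure_def)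
  have "(\<integral>\<^sup>+z. (\<integral>\<^sup>+t. of_bool (z t) \<partial>count_space UNIV) \<partial>?M)
      = (\<integral>\<^sup>+t. \<integral>\<^sup>+z. of_bool (z t) \<partial>?M \<partial>count_space UNIV)"
    by (rule nn_integral_count_space_nn_integral) auto
  also have "\<dots> = (\<integral>\<^sup>+t. ennreal (pmf (bernoulli_pmf (p t)) True) \<partial>count_space UNIV)"
    using prob
    by (simp add: nn_integral_PiM_component bernoulli_measure_def nn_integral_measure_pmf
        nn_integral_count_space_finite UNIV_bool)
  also have "\<dots> \<le> (\<integral>\<^sup>+t. ennreal (p t) \<partial>count_space UNIV)"
    by (intro nn_integral_mono ennreal_pmf_bernoulli_True_le)
  finally have "(\<integral>\<^sup>+z. (\<integral>\<^sup>+t. of_bool (z t) \<partial>count_space UNIV) \<partial>?M) \<noteq> \<infinity>"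
    using summable by (auto simp: top_unique)
  then have "AE z in ?M. (\<integral>\<^sup>+t. of_bool (z t) \<partial>count_space UNIV) \<noteq> \<infinity>"
    by (intro nn_integral_noteq_infinite borel_measurable_nn_integral_count_space) measurable
  then show ?thesis
    by eventually_elim (simp add: nn_integral_count_space_of_bool_less_top_iff[symmetric] less_top)
qed

section \<open>Poisson processes\<close>

lemma
  assumes "poisson_process_law mu P"
  shows prob_space_poisson_process: "prob_space P"
    and sets_poisson_process: "sets P = sets (PiM (UNIV :: nat set) (\<lambda>_. borel))"
  using assms unfolding poisson_process_law_def by auto

lemma space_poisson_process: "poisson_process_law mu P \<Longrightarrow> space P = UNIV"
  using sets_eq_imp_space_eq[OF sets_poisson_process] by (simp add: space_PiM)

lemma measurable_poisson_process_point:
  "poisson_process_law mu P \<Longrightarrow> (\<lambda>x. x i) \<in> borel_measurable P"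
  unfolding measurable_cong_sets[OF sets_poisson_process refl]
  by (rule measurable_component_singleton) simp

lemma
  fixes l :: real
  shows sums_poisson_weights: "(\<lambda>k. l ^ k / fact k * exp (- l)) sums 1"
    and sums_poisson_mean: "(\<lambda>k. real k * (l ^ k / fact k * exp (- l))) sums l"
proof -
  have "(\<lambda>k. l ^ k / fact k) sums exp l"
    using exp_converges[of l] by (simp add: divide_inverse mult_ac scaleR_conv_of_real)
  from sums_mult2[OF this, of "exp (- l)"]
  show weights: "(\<lambda>k. l ^ k / fact k * exp (- l)) sums 1"
    by (simp add: exp_minus)
  have shift: "(\<lambda>k. real (Suc k) * (l ^ Suc k / fact (Suc k) * exp (- l)))
      = (\<lambda>k. l * (l ^ k / fact k * exp (- l)))"
    unfolding fact_Suc power_Suc of_nat_mult by (intro ext) (simp add: field_simps del: of_nat_Suc)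
  have "(\<lambda>k. l * (l ^ k / fact k * exp (- l))) sums l"
    using sums_mult[OF weights, of l] by simp
  then have "(\<lambda>k. real (Suc k) * (l ^ Suc k / fact (Suc k) * exp (- l))) sums l"
    by (simp only: shift)
  then show "(\<lambda>k. real k * (l ^ k / fact k * exp (- l))) sums l"
    by (subst (asm) sums_Suc_iff) simp
qed

lemma nn_integral_poisson_process_count:
  assumes law: "poisson_process_law mu P"
    and A: "A \<in> sets borel" "emeasure mu A < \<infinity>"
  shows "(\<integral>\<^sup>+x. (\<Sum>i. indicator A (x i)) \<partial>P) = emeasure mu A"
proof -
  interpret prob_space P
    by (rule prob_space_poisson_process[OF law])
  define l where "l = measure mu A"
  have l: "0 \<le> l" "emeasure mu A = ennreal l"
    using A(2) unfolding l_def by (auto simp: emeasure_eq_ennreal_measure)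
  note [measurable] = measurable_poisson_process_point[OF law]
  have count: "(\<Sum>i. indicator A (x i) :: ennreal) = emeasure (count_space UNIV) {i. x i \<in> A}" for x
  proof -
    have "(\<lambda>i. indicator A (x i) :: ennreal) = indicator {i. x i \<in> A}"
      by (auto simp: indicator_def)
    then show ?thesis
      using nn_integral_count_space_nat[of "indicator {i. x i \<in> A}"] by simp
  qed
  have level: "emeasure P {x \<in> space P. (\<Sum>i. indicator A (x i)) = (of_nat k :: ennreal)}
      = ennreal (l ^ k / fact k * exp (- l))" for k
  proof -
    have set_eq: "{x \<in> space P. (\<Sum>i. indicator A (x i)) = (of_nat k :: ennreal)}
        = {x \<in> space P. finite {i. x i \<in> A} \<and> pcount A x = k}"
      unfolding count pcount_def by (auto simp: emeasure_count_space)
    have "measure P {x \<in> space P. finite {i. x i \<in> A} \<and> pcount A x = k} = l ^ k / fact k * exp (- l)"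
      using law A unfolding poisson_process_law_def l_def by blast
    then show ?thesis
      unfolding set_eq by (simp add: emeasure_eq_measure)
  qed
  note [measurable] = A(1)
  have "(\<integral>\<^sup>+x. (\<Sum>i. indicator A (x i)) \<partial>P)
      = (\<Sum>k. of_nat k * emeasure P {x \<in> space P. (\<Sum>i. indicator A (x i)) = (of_nat k :: ennreal)})"
  proof (rule nn_integral_nat_valued_eq_suminf[OF prob_space_axioms])
    show "(\<Sum>k. emeasure P {x \<in> space P. (\<Sum>i. indicator A (x i)) = (of_nat k :: ennreal)}) = 1"
      using sums_poisson_weights[of l] l(1) by (simp add: level suminf_ennreal2 sums_iff)
  qed measurable
  also have "\<dots> = (\<Sum>k. ennreal (real k * (l ^ k / fact k * exp (- l))))"
    unfolding level by (simp only: ennreal_of_nat_eq_real_of_nat ennreal_mult'[symmetric] of_nat_0_le_iff)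
  also have "\<dots> = emeasure mu A"
    using sums_poisson_mean[of l] l by (subst suminf_ennreal2) (auto simp: sums_iff)
  finally show ?thesis .
qed

lemma poisson_process_campbell_step:
  fixes C :: "'t::countable \<Rightarrow> real set" and w :: "'t \<Rightarrow> ennreal"
  assumes law: "poisson_process_law mu P" and sets_mu: "sets mu = sets borel"
    and C: "\<And>t. C t \<in> sets borel" "\<And>t. emeasure mu (C t) < \<infinity>"
  shows "(\<integral>\<^sup>+x. (\<Sum>i. \<integral>\<^sup>+t. w t * indicator (C t) (x i) \<partial>count_space UNIV) \<partial>P)
       = (\<integral>\<^sup>+r. (\<integral>\<^sup>+t. w t * indicator (C t) r \<partial>count_space UNIV) \<partial>mu)"
proof -
  note [measurable] = measurable_poisson_process_point[OF law] C(1)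
  have [measurable]: "C t \<in> sets mu" for t
    using C(1) sets_mu by simp
  have "(\<integral>\<^sup>+x. (\<Sum>i. \<integral>\<^sup>+t. w t * indicator (C t) (x i) \<partial>count_space UNIV) \<partial>P)
      = (\<integral>\<^sup>+x. \<integral>\<^sup>+t. w t * (\<Sum>i. indicator (C t) (x i)) \<partial>count_space UNIV \<partial>P)"
    by (subst nn_integral_count_space_nat[symmetric], subst nn_integral_count_space_nn_integral)
       (auto simp: nn_integral_count_space_nat)
  also have "\<dots> = (\<integral>\<^sup>+t. w t * (\<integral>\<^sup>+x. (\<Sum>i. indicator (C t) (x i)) \<partial>P) \<partial>count_space UNIV)"
    by (subst nn_integral_count_space_nn_integral) (auto simp: nn_integral_cmult)
  also have "\<dots> = (\<integral>\<^sup>+t. w t * emeasure mu (C t) \<partial>count_space UNIV)"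
    using nn_integral_poisson_process_count[OF law C] by simp
  also have "\<dots> = (\<integral>\<^sup>+r. (\<integral>\<^sup>+t. w t * indicator (C t) r \<partial>count_space UNIV) \<partial>mu)"
    by (subst nn_integral_count_space_nn_integral) (auto simp: nn_integral_cmult_indicator)
  finally show ?thesis .
qed

section \<open>Gamma processes\<close>

text \<open>The law of a Poisson process only describes the counts in sets of finite intensity, so
  Campbell's formula is available for step functions on such sets only. The atoms of a gamma process
  are therefore compared with the step function dyadic_step, which lies between |r| and 2|r|.\<close>

definition dyadic_shell :: "int \<Rightarrow> real set" where
  "dyadic_shell n = {r. 2 powr n < \<bar>r\<bar> \<and> \<bar>r\<bar> \<le> 2 powr (n + 1)}"

lemma dyadic_shell_borel [measurable]: "dyadic_shell n \<in> sets borel"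
  unfolding dyadic_shell_def by measurable

lemma mem_dyadic_shell_iff: "r \<in> dyadic_shell n \<longleftrightarrow> r \<noteq> 0 \<and> n = \<lceil>log 2 \<bar>r\<bar>\<rceil> - 1"
proof (cases "r = 0")
  case False
  then have "r \<in> dyadic_shell n \<longleftrightarrow> n < log 2 \<bar>r\<bar> \<and> log 2 \<bar>r\<bar> \<le> n + 1"
    unfolding dyadic_shell_def by (simp add: less_log_iff log_le_iff)
  also have "\<dots> \<longleftrightarrow> \<lceil>log 2 \<bar>r\<bar>\<rceil> = n + 1"
    by (simp add: ceiling_eq_iff)
  finally show ?thesis using False by auto
qed (simp add: dyadic_shell_def)

definition dyadic_step :: "real \<Rightarrow> ennreal" where
  "dyadic_step r = (\<integral>\<^sup>+n. ennreal (2 powr (real_of_int n + 1)) * indicator (dyadic_shell n) r \<partial>count_space UNIV)"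

lemma dyadic_step_eq: "dyadic_step r = (if r = 0 then 0 else ennreal (2 powr \<lceil>log 2 \<bar>r\<bar>\<rceil>))"
proof (cases "r = 0")
  case True
  then show ?thesis by (simp add: dyadic_step_def indicator_def mem_dyadic_shell_iff)
next
  case False
  then have shell: "indicator (dyadic_shell n) r = indicator {\<lceil>log 2 \<bar>r\<bar>\<rceil> - 1} n" for n
    by (auto simp: indicator_def mem_dyadic_shell_iff)
  show ?thesis
    unfolding dyadic_step_def shell using False by simp
qed

lemma abs_le_dyadic_step: "ennreal \<bar>r\<bar> \<le> dyadic_step r"
proof (cases "r = 0")
  case False
  then have "\<bar>r\<bar> = 2 powr log 2 \<bar>r\<bar>" by simp
  also have "\<dots> \<le> 2 powr \<lceil>log 2 \<bar>r\<bar>\<rceil>" by simp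
  finally show ?thesis using False by (simp add: dyadic_step_eq)
qed (simp add: dyadic_step_eq)

lemma dyadic_step_le: "dyadic_step r \<le> 2 * ennreal \<bar>r\<bar>"
proof (cases "r = 0")
  case False
  have "2 powr \<lceil>log 2 \<bar>r\<bar>\<rceil> \<le> 2 powr (log 2 \<bar>r\<bar> + 1)"
    by (intro powr_mono) linarith+
  also have "\<dots> = 2 * \<bar>r\<bar>" using False by (simp add: powr_add)
  finally have "ennreal (2 powr \<lceil>log 2 \<bar>r\<bar>\<rceil>) \<le> ennreal (2 * \<bar>r\<bar>)"
    by (rule ennreal_leI)
  then show ?thesis using False by (simp add: dyadic_step_eq ennreal_mult)
qed (simp add: dyadic_step_eq)

lemma sets_gamma_process_intensity [simp, measurable_cong]:
  "sets (gamma_process_intensity g0 c) = sets borel"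
  by (simp add: gamma_process_intensity_def)

lemma nn_integral_abs_gamma_process_intensity:
  assumes c: "0 < c"
  shows "(\<integral>\<^sup>+r. ennreal \<bar>r\<bar> \<partial>gamma_process_intensity g0 c) = ennreal (g0 / c)"
proof -
  have "(\<integral>\<^sup>+r. ennreal \<bar>r\<bar> \<partial>gamma_process_intensity g0 c)
      = (\<integral>\<^sup>+r. ennreal g0 * ennreal (if 0 < r then r powr (1 - 1) * exp (- r / (1 / c)) else 0) \<partial>lborel)"
    unfolding gamma_process_intensity_def
    by (subst nn_integral_density)
       (auto intro!: nn_integral_cong simp: ennreal_mult''[symmetric] ennreal_mult'[symmetric] mult.commute[of c])
  also have "\<dots> = ennreal g0 * ennreal (1 / c)"
    using c by (simp add: nn_integral_cmult nn_integral_gamma_kernel)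
  also have "\<dots> = ennreal (g0 / c)"
    using c by (simp add: ennreal_mult''[symmetric])
  finally show ?thesis .
qed

lemma nn_integral_dyadic_step_gamma_process_intensity:
  assumes "0 < c"
  shows "(\<integral>\<^sup>+r. dyadic_step r \<partial>gamma_process_intensity g0 c) < \<infinity>"
proof -
  have "(\<lambda>r. ennreal \<bar>r\<bar>) \<in> borel_measurable (gamma_process_intensity g0 c)"
    by measurable
  then have "(\<integral>\<^sup>+r. 2 * ennreal \<bar>r\<bar> \<partial>gamma_process_intensity g0 c) = 2 * ennreal (g0 / c)"
    using assms by (simp add: nn_integral_cmult nn_integral_abs_gamma_process_intensity)
  moreover have "(\<integral>\<^sup>+r. dyadic_step r \<partial>gamma_process_intensity g0 c)
      \<le> (\<integral>\<^sup>+r. 2 * ennreal \<bar>r\<bar> \<partial>gamma_process_intensity g0 c)"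
    by (intro nn_integral_mono dyadic_step_le)
  ultimately show ?thesis
    by (simp add: le_less_trans ennreal_mult_less_top)
qed

lemma emeasure_gamma_process_intensity_dyadic_shell:
  assumes "0 < c"
  shows "emeasure (gamma_process_intensity g0 c) (dyadic_shell n) < \<infinity>"
proof -
  let ?mu = "gamma_process_intensity g0 c"
  have "ennreal (2 powr (real_of_int n + 1)) * emeasure ?mu (dyadic_shell n)
      = (\<integral>\<^sup>+r. ennreal (2 powr (real_of_int n + 1)) * indicator (dyadic_shell n) r \<partial>?mu)"
    by (simp add: nn_integral_cmult_indicator)
  also have "\<dots> \<le> (\<integral>\<^sup>+r. dyadic_step r \<partial>?mu)"
    unfolding dyadic_step_def by (intro nn_integral_mono le_nn_integral_count_space)
  finally have "ennreal (2 powr (real_of_int n + 1)) * emeasure ?mu (dyadic_shell n) < \<infinity>"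
    using nn_integral_dyadic_step_gamma_process_intensity[OF assms] by (rule le_less_trans)
  then show ?thesis
    by (auto simp: ennreal_mult_less_top)
qed

lemma AE_gamma_process_abs_summable:
  assumes law: "gamma_process_law g0 c P" and c: "0 < c"
  shows "AE x in P. (\<integral>\<^sup>+i. ennreal \<bar>x i\<bar> \<partial>count_space UNIV) < \<infinity>"
proof -
  have law: "poisson_process_law (gamma_process_intensity g0 c) P"
    using law unfolding gamma_process_law_def .
  note [measurable] = measurable_poisson_process_point[OF law]
  have "(\<integral>\<^sup>+x. (\<Sum>i. ennreal \<bar>x i\<bar>) \<partial>P) \<le> (\<integral>\<^sup>+x. (\<Sum>i. dyadic_step (x i)) \<partial>P)"
    by (intro nn_integral_mono suminf_le abs_le_dyadic_step) auto
  also have "\<dots> = (\<integral>\<^sup>+r. dyadic_step r \<partial>gamma_process_intensity g0 c)"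
    unfolding dyadic_step_def
    by (intro poisson_process_campbell_step[OF law] emeasure_gamma_process_intensity_dyadic_shell c) auto
  finally have "(\<integral>\<^sup>+x. (\<Sum>i. ennreal \<bar>x i\<bar>) \<partial>P) \<noteq> \<infinity>"
    using nn_integral_dyadic_step_gamma_process_intensity[OF c, of g0] by (auto simp: top_unique)
  then have "AE x in P. (\<Sum>i. ennreal \<bar>x i\<bar>) \<noteq> \<infinity>"
    by (intro nn_integral_noteq_infinite) measurable
  then show ?thesis
    by (simp add: nn_integral_count_space_nat less_top)
qed

section \<open>The graph gamma process\<close>

lemma one_minus_exp_neg_le_abs: "1 - exp (- x) \<le> \<bar>x\<bar>" for x :: real
  using exp_ge_add_one_self[of "- x"] abs_ge_self[of x] by linarith

definition ggp_conditional_law :: "(nat \<Rightarrow> real) \<Rightarrow> (nat \<Rightarrow> real) \<Rightarrow> (nat \<Rightarrow> real) \<Rightarrow> real \<Rightarrow> real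
    \<Rightarrow> (nat \<times> nat \<times> nat \<Rightarrow> bool) measure"
where
  "ggp_conditional_law rho tau r e f =
     bind (PiM UNIV (\<lambda>(i, k). gamma_measure (rho i) (1 / e))) (\<lambda>theta.
       bind (PiM UNIV (\<lambda>(j, k). gamma_measure (tau j) (1 / f))) (\<lambda>psi.
         PiM UNIV (\<lambda>(i, j, k). bernoulli_measure (1 - exp (- (r k * theta (i, k) * psi (j, k)))))))"

lemma ggp_law_eq_bind:
  "ggp_law Prho Ptau Pr e f = bind (Prho \<Otimes>\<^sub>M (Ptau \<Otimes>\<^sub>M Pr)) (\<lambda>(rho, tau, r). ggp_conditional_law rho tau r e f)"
  unfolding ggp_law_def ggp_conditional_law_def ..

lemma
  shows sets_ggp_edges:
    "sets (PiM UNIV (\<lambda>(i, j, k). bernoulli_measure (1 - exp (- (r k * theta (i, k) * psi (j, k))))))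
     = sets (PiM (UNIV :: (nat \<times> nat \<times> nat) set) (\<lambda>_. count_space UNIV))"
    and space_PiM_gamma_nonempty:
    "space (PiM (UNIV :: (nat \<times> nat) set) (\<lambda>(i, k). gamma_measure (a i) s)) \<noteq> {}"
  by (auto intro!: sets_PiM_cong simp: bernoulli_measure_def space_PiM split_beta)

lemma sets_ggp_conditional_law:
  "sets (ggp_conditional_law rho tau r e f) = sets (PiM UNIV (\<lambda>_. count_space UNIV))"
  unfolding ggp_conditional_law_def
  by (intro sets_bind[OF _ space_PiM_gamma_nonempty] sets_bind[OF sets_ggp_edges space_PiM_gamma_nonempty])

lemma AE_ggp_theta_weighted_sum_finite:
  fixes rho r :: "nat \<Rightarrow> real"
  assumes e: "0 < e"
    and rho: "(\<integral>\<^sup>+i. ennreal \<bar>rho i\<bar> \<partial>count_space UNIV) < \<infinity>"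
    and r: "(\<integral>\<^sup>+k. ennreal \<bar>r k\<bar> \<partial>count_space UNIV) < \<infinity>"
  shows "AE theta in PiM UNIV (\<lambda>(i, k). gamma_measure (rho i) (1 / e)).
           (\<integral>\<^sup>+t. ennreal \<bar>r (snd t)\<bar> * ennreal \<bar>theta t\<bar> \<partial>count_space UNIV) < \<infinity>"
proof -
  have "(\<integral>\<^sup>+t. ennreal \<bar>r (snd t)\<bar> * ennreal (rho (fst t)) \<partial>count_space UNIV)
      \<le> (\<integral>\<^sup>+t. ennreal \<bar>r (snd t)\<bar> * ennreal \<bar>rho (fst t)\<bar> \<partial>count_space UNIV)"
    by (intro nn_integral_mono mult_left_mono ennreal_leI) auto
  also have "\<dots> = (\<integral>\<^sup>+i. ennreal \<bar>rho i\<bar> \<partial>count_space UNIV) * (\<integral>\<^sup>+k. ennreal \<bar>r k\<bar> \<partial>count_space UNIV)"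
    using nn_integral_count_space_prod_mult[of "\<lambda>i. ennreal \<bar>rho i\<bar>" "\<lambda>k. ennreal \<bar>r k\<bar>"]
    by (simp add: mult.commute)
  also have "\<dots> < \<infinity>"
    using rho r by (simp add: ennreal_mult_less_top)
  finally have mean: "(\<integral>\<^sup>+t. ennreal \<bar>r (snd t)\<bar> * ennreal (rho (fst t)) \<partial>count_space UNIV) < \<infinity>" .
  have "AE theta in PiM UNIV (\<lambda>t. gamma_measure (rho (fst t)) (1 / e)).
      (\<integral>\<^sup>+t. ennreal \<bar>r (snd t)\<bar> * ennreal \<bar>theta t\<bar> \<partial>count_space UNIV) < \<infinity>"
    by (rule AE_PiM_gamma_weighted_abs_sum_finite) (use e mean in simp_all)
  then show ?thesis
    by (simp only: case_prod_beta')
qed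

lemma AE_ggp_psi_weighted_sum_finite:
  fixes tau r :: "nat \<Rightarrow> real" and theta :: "nat \<times> nat \<Rightarrow> real"
  assumes f: "0 < f"
    and tau: "(\<integral>\<^sup>+j. ennreal \<bar>tau j\<bar> \<partial>count_space UNIV) < \<infinity>"
    and theta: "(\<integral>\<^sup>+t. ennreal \<bar>r (snd t)\<bar> * ennreal \<bar>theta t\<bar> \<partial>count_space UNIV) < \<infinity>"
  shows "AE psi in PiM UNIV (\<lambda>(j, k). gamma_measure (tau j) (1 / f)).
           (\<integral>\<^sup>+u. ennreal \<bar>r (snd (snd u))\<bar> * ennreal \<bar>theta (fst u, snd (snd u))\<bar>
              * ennreal \<bar>psi (snd u)\<bar> \<partial>count_space UNIV) < \<infinity>"
proof -
  let ?W = "\<lambda>u :: nat \<times> nat \<times> nat. ennreal \<bar>r (snd (snd u))\<bar> * ennreal \<bar>theta (fst u, snd (snd u))\<bar>"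
  have "(\<integral>\<^sup>+u. ?W u * ennreal (tau (fst (snd u))) \<partial>count_space UNIV)
      \<le> (\<integral>\<^sup>+u. ?W u * ennreal \<bar>tau (fst (snd u))\<bar> \<partial>count_space UNIV)"
    by (intro nn_integral_mono mult_left_mono ennreal_leI) auto
  also have "\<dots> = (\<integral>\<^sup>+t. ennreal \<bar>r (snd t)\<bar> * ennreal \<bar>theta t\<bar> \<partial>count_space UNIV)
      * (\<integral>\<^sup>+j. ennreal \<bar>tau j\<bar> \<partial>count_space UNIV)"
    using nn_integral_count_space_triple_mult[of "\<lambda>t. ennreal \<bar>r (snd t)\<bar> * ennreal \<bar>theta t\<bar>"
        "\<lambda>j. ennreal \<bar>tau j\<bar>"]
    by simp
  also have "\<dots> < \<infinity>"
    using tau theta by (simp add: ennreal_mult_less_top)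
  finally have mean: "(\<integral>\<^sup>+u. ?W u * ennreal (tau (fst (snd u))) \<partial>count_space UNIV) < \<infinity>" .
  have "AE psi in PiM UNIV (\<lambda>t. gamma_measure (tau (fst t)) (1 / f)).
      (\<integral>\<^sup>+u. ?W u * ennreal \<bar>psi (snd u)\<bar> \<partial>count_space UNIV) < \<infinity>"
    by (rule AE_PiM_gamma_weighted_abs_sum_finite) (use f mean in simp_all)
  then show ?thesis
    by (simp only: case_prod_beta')
qed

lemma AE_ggp_edges_finite:
  fixes r :: "nat \<Rightarrow> real" and theta psi :: "nat \<times> nat \<Rightarrow> real"
  assumes "(\<integral>\<^sup>+u. ennreal \<bar>r (snd (snd u))\<bar> * ennreal \<bar>theta (fst u, snd (snd u))\<bar>
      * ennreal \<bar>psi (snd u)\<bar> \<partial>count_space UNIV) < \<infinity>"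
  shows "AE z in PiM UNIV (\<lambda>(i, j, k). bernoulli_measure (1 - exp (- (r k * theta (i, k) * psi (j, k))))).
           finite {t. z t}"
proof -
  let ?p = "\<lambda>(i, j, k). 1 - exp (- (r k * theta (i, k) * psi (j, k)))"
  have bound: "ennreal (1 - exp (- (a * b * c))) \<le> ennreal \<bar>a\<bar> * ennreal \<bar>b\<bar> * ennreal \<bar>c\<bar>"
    for a b c :: real
  proof -
    have "ennreal (1 - exp (- (a * b * c))) \<le> ennreal (\<bar>a\<bar> * \<bar>b\<bar> * \<bar>c\<bar>)"
      using one_minus_exp_neg_le_abs[of "a * b * c"] by (intro ennreal_leI) (simp add: abs_mult)
    then show ?thesis by (simp add: ennreal_mult)
  qed
  have "(\<integral>\<^sup>+t. ennreal (?p t) \<partial>count_space UNIV)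
      \<le> (\<integral>\<^sup>+u. ennreal \<bar>r (snd (snd u))\<bar> * ennreal \<bar>theta (fst u, snd (snd u))\<bar>
            * ennreal \<bar>psi (snd u)\<bar> \<partial>count_space UNIV)"
    by (intro nn_integral_mono) (clarsimp split: prod.split simp: bound)
  then have "(\<integral>\<^sup>+t. ennreal (?p t) \<partial>count_space UNIV) < \<infinity>"
    using assms by (rule le_less_trans)
  then have "AE z in PiM UNIV (\<lambda>t. bernoulli_measure (?p t)). finite {t. z t}"
    by (rule AE_PiM_bernoulli_finite)
  then show ?thesis
    by (simp only: prod.case_distrib)
qed

lemma AE_ggp_conditional_law_finite:
  fixes rho tau r :: "nat \<Rightarrow> real"
  assumes e: "0 < e" and f: "0 < f"
    and rho: "(\<integral>\<^sup>+i. ennreal \<bar>rho i\<bar> \<partial>count_space UNIV) < \<infinity>"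
    and tau: "(\<integral>\<^sup>+j. ennreal \<bar>tau j\<bar> \<partial>count_space UNIV) < \<infinity>"
    and r: "(\<integral>\<^sup>+k. ennreal \<bar>r k\<bar> \<partial>count_space UNIV) < \<infinity>"
  shows "AE z in ggp_conditional_law rho tau r e f. finite {t. z t}"
proof -
  let ?S = "PiM (UNIV :: (nat \<times> nat \<times> nat) set) (\<lambda>_. count_space (UNIV :: bool set))"
  have sets_psi: "sets (PiM UNIV (\<lambda>(j, k). gamma_measure (tau j) (1 / f)) \<bind> (\<lambda>psi.
      PiM UNIV (\<lambda>(i, j, k). bernoulli_measure (1 - exp (- (r k * theta (i, k) * psi (j, k))))))) = sets ?S"
    for theta :: "nat \<times> nat \<Rightarrow> real"
    by (rule sets_bind[OF sets_ggp_edges space_PiM_gamma_nonempty])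
  have "AE theta in PiM UNIV (\<lambda>(i, k). gamma_measure (rho i) (1 / e)).
      AE z in PiM UNIV (\<lambda>(j, k). gamma_measure (tau j) (1 / f)) \<bind> (\<lambda>psi.
        PiM UNIV (\<lambda>(i, j, k). bernoulli_measure (1 - exp (- (r k * theta (i, k) * psi (j, k)))))).
      finite {t. z t}"
    using AE_ggp_theta_weighted_sum_finite[OF e rho r]
  proof eventually_elim
    case (elim theta)
    have "AE psi in PiM UNIV (\<lambda>(j, k). gamma_measure (tau j) (1 / f)).
        AE z in PiM UNIV (\<lambda>(i, j, k). bernoulli_measure (1 - exp (- (r k * theta (i, k) * psi (j, k))))).
        finite {t. z t}"
      using AE_ggp_psi_weighted_sum_finite[OF f tau elim] by eventually_elim (rule AE_ggp_edges_finite)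
    then show ?case
      by (rule AE_bindI[where B="?S"])
         (simp_all add: space_PiM_gamma_nonempty sets_ggp_edges pred_finite_Collect_PiM)
  qed
  then show ?thesis
    unfolding ggp_conditional_law_def
    by (rule AE_bindI[where B="?S"]) (simp_all add: space_PiM_gamma_nonempty sets_psi pred_finite_Collect_PiM)
qed

lemma finite_ggp_adj:
  assumes "finite {t. z t}"
  shows "finite {(i, j). ggp_adj z i j}"
proof -
  have "{(i, j). ggp_adj z i j} \<subseteq> (\<lambda>(i, j, k). (i, j)) ` {t. z t}"
    unfolding ggp_adj_def by force
  then show ?thesis
    using assms by (rule finite_subset[OF _ finite_imageI])
qed

theorem lemma2:
  fixes g0rho crho g0tau ctau g0 c e f :: real
    and Prho Ptau Pr :: "(nat \<Rightarrow> real) measure"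
  assumes "0 < g0rho" "0 < crho" "0 < g0tau" "0 < ctau" "0 < g0" "0 < c"
    and "0 < e" "0 < f"
    and "gamma_process_law g0rho crho Prho"
    and "gamma_process_law g0tau ctau Ptau"
    and "gamma_process_law g0 c Pr"
  shows "AE z in ggp_law Prho Ptau Pr e f. finite {(i, j). ggp_adj z i j}"
proof -
  let ?abs_summable = "\<lambda>x :: nat \<Rightarrow> real. (\<integral>\<^sup>+i. ennreal \<bar>x i\<bar> \<partial>count_space UNIV) < \<infinity>"
  have laws: "poisson_process_law (gamma_process_intensity g0rho crho) Prho"
    "poisson_process_law (gamma_process_intensity g0tau ctau) Ptau"
    "poisson_process_law (gamma_process_intensity g0 c) Pr"
    using assms(9-11) unfolding gamma_process_law_def .
  have sigma_finite: "sigma_finite_measure Pr" "sigma_finite_measure (Ptau \<Otimes>\<^sub>M Pr)"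
    using laws by (auto intro: prob_space_imp_sigma_finite prob_space_pair prob_space_poisson_process)
  have "AE w in Prho \<Otimes>\<^sub>M (Ptau \<Otimes>\<^sub>M Pr).
      ?abs_summable (fst w) \<and> ?abs_summable (fst (snd w)) \<and> ?abs_summable (snd (snd w))"
    using AE_gamma_process_abs_summable[OF assms(9,2)] AE_gamma_process_abs_summable[OF assms(10,4)]
      AE_gamma_process_abs_summable[OF assms(11,6)]
    by (rule AE_pair_measure_triple[OF sigma_finite])
  then have "AE w in Prho \<Otimes>\<^sub>M (Ptau \<Otimes>\<^sub>M Pr).
      AE z in (\<lambda>(rho, tau, r). ggp_conditional_law rho tau r e f) w. finite {t. z t}"
    by eventually_elim (auto intro: AE_ggp_conditional_law_finite[OF assms(7,8)])
  then have "AE z in ggp_law Prho Ptau Pr e f. finite {t. z t}"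
    unfolding ggp_law_eq_bind
    by (rule AE_bindI[where B="PiM UNIV (\<lambda>_. count_space UNIV)"])
       (auto simp: space_pair_measure space_poisson_process[OF laws(1)] space_poisson_process[OF laws(2)]
         space_poisson_process[OF laws(3)] sets_ggp_conditional_law pred_finite_Collect_PiM)
  then show ?thesis
    by eventually_elim (rule finite_ggp_adj)
qed

end
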